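(* Let $0\le\theta_1\le\theta_2\le\theta_3\le\theta_4<2\pi$ with $\theta_4-\theta_3\neq\theta_2-\theta_1$, and on $(\mathbb C^2)^{\otimes3}$ define $|\Phi_1\rangle=|000\rangle+e^{i\theta_1}|111\rangle$, $|\Phi_2\rangle=|001\rangle+e^{i\theta_2}|110\rangle$, $|\Phi_3\rangle=|010\rangle+e^{i\theta_3}|101\rangle$, $|\Phi_4\rangle=|011\rangle+e^{i\theta_4}|100\rangle$, and $|\Psi_k\rangle$ the same vectors with the plus signs replaced by minus signs ($k=1,\dots,4$). Then: (i) the orthogonal complement of $\mathrm{span}\{|\Phi_k\rangle\}$ equals $\mathrm{span}\{|\Psi_k\rangle\}$, and neither $\mathrm{span}\{|\Phi_k\rangle\}$ nor $\mathrm{span}\{|\Psi_k\rangle\}$ contains a nonzero fully product vector $|a\rangle|b\rangle|c\rangle$ (so both $\{|\Phi_k\rangle\}$ and $\{|\Psi_k\rangle\}$ are unextendible bases); (ii) the set $\{|\Phi_1\rangle,\dots,|\Phi_4\rangle\}$ (normalized) is perfectly distinguishable by LOCC among the three parties.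
   Context: A set $T$ of linearly independent pure states is an unextendible basis if the orthogonal complement of $\mathrm{span}(T)$ contains no nonzero fully product vector. "Perfectly distinguishable by LOCC": a finite-round protocol of local measurements with broadcast outcomes identifies the given state with probability 1. *)

theory Defs
  imports Complex_Main
begin

text \<open>Three-qubit state space (C^2)^{\<otimes>3}: a vector is a function on basis labels
  (x,y,z), where False stands for |0> and True for |1>.\<close>

type_synonym qstate = "bool \<times> bool \<times> bool \<Rightarrow> complex"

text \<open>Local operator on one qubit (2x2 complex matrix), indexed by (row, column).\<close>
type_synonym qop = "bool \<Rightarrow> bool \<Rightarrow> complex"

definition ket3 :: "bool \<Rightarrow> bool \<Rightarrow> bool \<Rightarrow> qstate" where
  "ket3 a b c = (\<lambda>v. if v = (a, b, c) then 1 else 0)"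

definition vadd :: "qstate \<Rightarrow> qstate \<Rightarrow> qstate" where
  "vadd u v = (\<lambda>i. u i + v i)"

definition vscale :: "complex \<Rightarrow> qstate \<Rightarrow> qstate" where
  "vscale c u = (\<lambda>i. c * u i)"

definition zvec :: qstate where
  "zvec = (\<lambda>_. 0)"

definition vinner :: "qstate \<Rightarrow> qstate \<Rightarrow> complex" where
  "vinner x y = (\<Sum>i\<in>UNIV. cnj (x i) * y i)"

definition eith :: "real \<Rightarrow> complex" where
  "eith t = exp (\<i> * complex_of_real t)"

definition Phi :: "(nat \<Rightarrow> real) \<Rightarrow> nat \<Rightarrow> qstate" where
  "Phi \<theta> k =
    (if k = 1 then vadd (ket3 False False False) (vscale (eith (\<theta> 1)) (ket3 True True True))
     else if k = 2 then vadd (ket3 False False True) (vscale (eith (\<theta> 2)) (ket3 True True False))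
     else if k = 3 then vadd (ket3 False True False) (vscale (eith (\<theta> 3)) (ket3 True False True))
     else if k = 4 then vadd (ket3 False True True) (vscale (eith (\<theta> 4)) (ket3 True False False))
     else zvec)"

definition Psi :: "(nat \<Rightarrow> real) \<Rightarrow> nat \<Rightarrow> qstate" where
  "Psi \<theta> k =
    (if k = 1 then vadd (ket3 False False False) (vscale (- eith (\<theta> 1)) (ket3 True True True))
     else if k = 2 then vadd (ket3 False False True) (vscale (- eith (\<theta> 2)) (ket3 True True False))
     else if k = 3 then vadd (ket3 False True False) (vscale (- eith (\<theta> 3)) (ket3 True False True))
     else if k = 4 then vadd (ket3 False True True) (vscale (- eith (\<theta> 4)) (ket3 True False False))
     else zvec)"

definition span4 :: "(nat \<Rightarrow> qstate) \<Rightarrow> qstate set" where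
  "span4 v = {x. \<exists>c :: nat \<Rightarrow> complex. x = (\<lambda>i. \<Sum>k\<in>{1..4}. c k * v k i)}"

definition lin_indep4 :: "(nat \<Rightarrow> qstate) \<Rightarrow> bool" where
  "lin_indep4 v \<longleftrightarrow> (\<forall>c :: nat \<Rightarrow> complex.
      (\<lambda>i. \<Sum>k\<in>{1..4}. c k * v k i) = zvec \<longrightarrow> (\<forall>k\<in>{1..4}. c k = 0))"

definition orth_compl :: "qstate set \<Rightarrow> qstate set" where
  "orth_compl S = {y. \<forall>x\<in>S. vinner x y = 0}"

definition prodvec :: "(bool \<Rightarrow> complex) \<Rightarrow> (bool \<Rightarrow> complex) \<Rightarrow> (bool \<Rightarrow> complex) \<Rightarrow> qstate" where
  "prodvec a b c = (\<lambda>(x, y, z). a x * b y * c z)"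

definition is_fully_product :: "qstate \<Rightarrow> bool" where
  "is_fully_product v \<longleftrightarrow> (\<exists>a b c. v = prodvec a b c)"

definition unextendible_basis4 :: "(nat \<Rightarrow> qstate) \<Rightarrow> bool" where
  "unextendible_basis4 v \<longleftrightarrow> lin_indep4 v \<and>
     (\<forall>w\<in>orth_compl (span4 v). is_fully_product w \<longrightarrow> w = zvec)"

definition apply_local :: "nat \<Rightarrow> qop \<Rightarrow> qstate \<Rightarrow> qstate" where
  "apply_local p K \<psi> = (\<lambda>(x, y, z).
     if p = 0 then (\<Sum>x'\<in>UNIV. K x x' * \<psi> (x', y, z))
     else if p = 1 then (\<Sum>y'\<in>UNIV. K y y' * \<psi> (x, y', z))
     else (\<Sum>z'\<in>UNIV. K z z' * \<psi> (x, y, z')))"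

definition complete_meas :: "qop list \<Rightarrow> bool" where
  "complete_meas Ks \<longleftrightarrow> Ks \<noteq> [] \<and>
     (\<forall>i j. (\<Sum>m<length Ks. \<Sum>r\<in>UNIV. cnj ((Ks ! m) r i) * (Ks ! m) r j) = (if i = j then 1 else 0))"

text \<open>Finite-round LOCC protocol tree: at each node a party performs a local measurement,
  the outcome is broadcast, and the protocol continues in the subtree for that outcome.\<close>
datatype locc = Guess nat | Meas nat "(qop \<times> locc) list"

fun wf_locc :: "locc \<Rightarrow> bool" where
  "wf_locc (Guess g) = True"
| "wf_locc (Meas p bs) \<longleftrightarrow> p < 3 \<and> complete_meas (map fst bs) \<and>
     (\<forall>(K, c)\<in>set bs. wf_locc c)"

text \<open>The protocol run on (unnormalised post-measurement) state psi with true label k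
  always answers k: every leaf reached with nonzero probability (i.e. with nonzero
  post-measurement vector) carries guess k.\<close>
fun locc_identifies :: "locc \<Rightarrow> nat \<Rightarrow> qstate \<Rightarrow> bool" where
  "locc_identifies (Guess g) k \<psi> \<longleftrightarrow> (\<psi> = zvec \<or> g = k)"
| "locc_identifies (Meas p bs) k \<psi> \<longleftrightarrow>
     (\<forall>(K, c)\<in>set bs. locc_identifies c k (apply_local p K \<psi>))"

definition perfectly_LOCC_distinguishable :: "nat set \<Rightarrow> (nat \<Rightarrow> qstate) \<Rightarrow> bool" where
  "perfectly_LOCC_distinguishable I v \<longleftrightarrow>
     (\<exists>P. wf_locc P \<and> (\<forall>k\<in>I. locc_identifies P k (v k)))"

end

theory Submission imports Defs begin

(* Each of the eight vectors is a GHZ-type vector |x> + e |not x> for a unit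
   phase e, so both families are instances of one family  ghz_family e  indexed by four
   phases e 1..e 4 (e k = e^{i theta_k} for Phi, e k = -e^{i theta_k} for Psi).  Its span is
   the subspace  ghz_space e  of vectors with  w(not x) = e_k w(x)  on the four pairs of
   complementary basis labels; the family is linearly independent, and for unit phases
   the orthogonal complement of  ghz_space e  is  ghz_space (-e).  A product vector
   a x * b y * c z  in  ghz_space e  must vanish as soon as all e k are nonzero and
   e 1 * e 4 \<noteq> e 2 * e 3; for the given angles this inequality is exactly
   theta_4 - theta_3 \<noteq> theta_2 - theta_1 (mod 2 pi).  Finally, the members of each family
   have disjoint computational-basis supports, so the three parties measuring in the
   computational basis one after another distinguish them perfectly. *)

lemma sum_basis_labels:
  "(\<Sum>i\<in>(UNIV::(bool\<times>bool\<times>bool) set). f i) =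
     f (False,False,False) + f (False,False,True) + f (False,True,False) + f (False,True,True) +
     f (True,False,False) + f (True,False,True) + f (True,True,False) + f (True,True,True)"
proof -
  have labels: "(UNIV :: (bool\<times>bool\<times>bool) set) =
     {(False,False,False),(False,False,True),(False,True,False),(False,True,True),
      (True,False,False),(True,False,True),(True,True,False),(True,True,True)}"
    by (auto simp: UNIV_bool)
  show ?thesis by (simp add: labels add.assoc)
qed

lemma sum_1_to_4: "(\<Sum>k\<in>{1..4::nat}. f k) = f 1 + f 2 + f 3 + f 4"
proof -
  have "{1..4::nat} = {1,2,3,4}" by auto
  thus ?thesis by (simp add: add.assoc)
qed

lemma qstate_eqI: "(\<And>x y z. f (x,y,z) = g (x,y,z)) \<Longrightarrow> f = g"
  by auto

text \<open>The k-th vector is  |x_k> + e_k |not x_k>  with  x_1..x_4 = 000, 001, 010, 011.\<close>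
definition ghz_family :: "(nat \<Rightarrow> complex) \<Rightarrow> nat \<Rightarrow> qstate" where
  "ghz_family e k = (\<lambda>v.
     if k = 1 then (if v = (False,False,False) then 1 else if v = (True,True,True) then e 1 else 0)
     else if k = 2 then (if v = (False,False,True) then 1 else if v = (True,True,False) then e 2 else 0)
     else if k = 3 then (if v = (False,True,False) then 1 else if v = (True,False,True) then e 3 else 0)
     else if k = 4 then (if v = (False,True,True) then 1 else if v = (True,False,False) then e 4 else 0)
     else 0)"

definition ghz_space :: "(nat \<Rightarrow> complex) \<Rightarrow> qstate set" where
  "ghz_space e = {w.
       w (True,True,True) = e 1 * w (False,False,False)
     \<and> w (True,True,False) = e 2 * w (False,False,True)
     \<and> w (True,False,True) = e 3 * w (False,True,False)
     \<and> w (True,False,False) = e 4 * w (False,True,True)}"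

lemma Phi_eq_ghz_family: "Phi \<theta> = ghz_family (\<lambda>k. eith (\<theta> k))"
  by (intro ext) (auto simp: Phi_def ghz_family_def vadd_def vscale_def ket3_def zvec_def)

lemma Psi_eq_ghz_family: "Psi \<theta> = ghz_family (\<lambda>k. - eith (\<theta> k))"
  by (intro ext) (auto simp: Psi_def ghz_family_def vadd_def vscale_def ket3_def zvec_def)

text \<open>A vector of  ghz_space e  is determined by its values on the labels 0yz, which
  serve as the coefficients in the span.\<close>
lemma span_ghz_family: "span4 (ghz_family e) = ghz_space e"
proof
  show "span4 (ghz_family e) \<subseteq> ghz_space e"
    unfolding span4_def ghz_space_def sum_1_to_4 by (auto simp: ghz_family_def algebra_simps)
next
  show "ghz_space e \<subseteq> span4 (ghz_family e)"
  proof
    fix w assume w: "w \<in> ghz_space e"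
    define c :: "nat \<Rightarrow> complex" where
      "c k = (if k = 1 then w (False,False,False) else if k = 2 then w (False,False,True)
              else if k = 3 then w (False,True,False) else w (False,True,True))" for k
    have "w = (\<lambda>i. \<Sum>k\<in>{1..4}. c k * ghz_family e k i)"
    proof (rule qstate_eqI)
      fix x y z show "w (x,y,z) = (\<Sum>k\<in>{1..4}. c k * ghz_family e k (x,y,z))"
        using w unfolding sum_1_to_4 ghz_space_def c_def
        by (cases x; cases y; cases z) (simp_all add: ghz_family_def mult.commute)
    qed
    thus "w \<in> span4 (ghz_family e)" unfolding span4_def by blast
  qed
qed

text \<open>The coefficient of the k-th vector is read off at its label x_k.\<close>
lemma lin_indep_ghz_family: "lin_indep4 (ghz_family e)"
  unfolding lin_indep4_def
proof (intro allI impI)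
  fix c assume zero: "(\<lambda>i. \<Sum>k\<in>{1..4}. c k * ghz_family e k i) = zvec"
  have at: "c 1 * ghz_family e 1 v + c 2 * ghz_family e 2 v + c 3 * ghz_family e 3 v
            + c 4 * ghz_family e 4 v = 0" for v
  proof -
    have "(\<Sum>k\<in>{1..4}. c k * ghz_family e k v) = 0"
      using fun_cong[OF zero, of v] by (simp add: zvec_def)
    thus ?thesis by (simp only: sum_1_to_4)
  qed
  from at[of "(False,False,False)"] at[of "(False,False,True)"]
       at[of "(False,True,False)"] at[of "(False,True,True)"]
  have "c 1 = 0" "c 2 = 0" "c 3 = 0" "c 4 = 0" by (simp_all add: ghz_family_def)
  moreover have "k \<in> {1..4} \<Longrightarrow> k = 1 \<or> k = 2 \<or> k = 3 \<or> k = 4" for k :: nat by auto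
  ultimately show "\<forall>k\<in>{1..4}. c k = 0" by blast
qed

lemma cnj_phase_pairing:
  assumes "cnj e * e = 1" shows "cnj (e * a) * (- e * b) = - (cnj a * b)"
proof -
  have "cnj (e * a) * (- e * b) = - ((cnj e * e) * (cnj a * b))" by (simp add: ac_simps)
  thus ?thesis using assms by simp
qed

lemma orthogonal_to_ghz_pair:
  assumes "cnj e * e = 1" and "a + cnj e * b = 0" shows "b = - e * a"
proof -
  have "b = e * (cnj e * b)" using assms(1) by (simp add: ac_simps)
  also have "cnj e * b = - a" using assms(2) by (simp add: add_eq_0_iff)
  finally show ?thesis by simp
qed

lemma orth_compl_ghz_space:
  assumes unit: "\<And>k. cnj (e k) * e k = 1"
  shows "orth_compl (ghz_space e) = ghz_space (\<lambda>k. - e k)"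
proof
  show "ghz_space (\<lambda>k. - e k) \<subseteq> orth_compl (ghz_space e)"
  proof
    fix y assume y: "y \<in> ghz_space (\<lambda>k. - e k)"
    have "vinner x y = 0" if x: "x \<in> ghz_space e" for x
      using x y unfolding vinner_def sum_basis_labels ghz_space_def mem_Collect_eq
      by (elim conjE) (simp only: cnj_phase_pairing[OF unit], simp)
    thus "y \<in> orth_compl (ghz_space e)" unfolding orth_compl_def by blast
  qed
next
  show "orth_compl (ghz_space e) \<subseteq> ghz_space (\<lambda>k. - e k)"
  proof
    fix y assume y: "y \<in> orth_compl (ghz_space e)"
    have "ghz_family e k \<in> ghz_space e" for k by (simp add: ghz_space_def ghz_family_def)
    hence orth: "vinner (ghz_family e k) y = 0" for k using y by (simp add: orth_compl_def)
    have pairs: "y (False,False,False) + cnj (e 1) * y (True,True,True) = 0"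
         "y (False,False,True) + cnj (e 2) * y (True,True,False) = 0"
         "y (False,True,False) + cnj (e 3) * y (True,False,True) = 0"
         "y (False,True,True) + cnj (e 4) * y (True,False,False) = 0"
      using orth[of 1] orth[of 2] orth[of 3] orth[of 4]
      by (simp_all add: vinner_def sum_basis_labels ghz_family_def)
    show "y \<in> ghz_space (\<lambda>k. - e k)" unfolding ghz_space_def
      using orthogonal_to_ghz_pair[OF unit pairs(1)] orthogonal_to_ghz_pair[OF unit pairs(2)]
        orthogonal_to_ghz_pair[OF unit pairs(3)] orthogonal_to_ghz_pair[OF unit pairs(4)]
      by simp
  qed
qed

text \<open>Core algebra for product vectors: multiplying the equations for the pairs 1,4 and
  the pairs 2,3 gives  a1^2 X = e1 e4 a0^2 X = e2 e3 a0^2 X  with  X = b0 b1 c0 c1; so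
  either X = 0, which kills everything, or a0 = a1 = 0.\<close>
lemma product_coefficients_vanish:
  fixes a0 a1 b0 b1 c0 c1 e1 e2 e3 e4 :: complex
  assumes ne: "e1 \<noteq> 0" "e2 \<noteq> 0" "e3 \<noteq> 0" "e4 \<noteq> 0" and phases: "e1 * e4 \<noteq> e2 * e3"
    and eq1: "a1*b1*c1 = e1*(a0*b0*c0)" and eq2: "a1*b1*c0 = e2*(a0*b0*c1)"
    and eq3: "a1*b0*c1 = e3*(a0*b1*c0)" and eq4: "a1*b0*c0 = e4*(a0*b1*c1)"
  shows "a0*b0*c0 = 0 \<and> a0*b0*c1 = 0 \<and> a0*b1*c0 = 0 \<and> a0*b1*c1 = 0 \<and>
         a1*b0*c0 = 0 \<and> a1*b0*c1 = 0 \<and> a1*b1*c0 = 0 \<and> a1*b1*c1 = 0"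
proof (cases "b0*b1*c0*c1 = 0")
  case True
  hence "b0 = 0 \<or> b1 = 0 \<or> c0 = 0 \<or> c1 = 0" by simp
  thus ?thesis using eq1 eq2 eq3 eq4 ne by auto
next
  case False
  define X where "X = b0*b1*c0*c1"
  have "(a1*b1*c1)*(a1*b0*c0) = (e1*(a0*b0*c0))*(e4*(a0*b1*c1))" using eq1 eq4 by simp
  hence via14: "a1*a1*X = e1*e4*(a0*a0*X)" unfolding X_def by (simp add: ac_simps)
  have "(a1*b1*c0)*(a1*b0*c1) = (e2*(a0*b0*c1))*(e3*(a0*b1*c0))" using eq2 eq3 by simp
  hence via23: "a1*a1*X = e2*e3*(a0*a0*X)" unfolding X_def by (simp add: ac_simps)
  have "X \<noteq> 0" using False X_def by simp
  have "e1*e4*(a0*a0*X) = e2*e3*(a0*a0*X)" using via14 via23 by metis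
  hence "(e1*e4 - e2*e3)*(a0*a0*X) = 0" by (simp add: left_diff_distrib)
  hence "a0*a0*X = 0" using phases by simp
  hence "a0 = 0" using \<open>X \<noteq> 0\<close> by simp
  moreover from this have "a1 = 0" using via14 \<open>X \<noteq> 0\<close> by simp
  ultimately show ?thesis by simp
qed

lemma no_product_in_ghz_space:
  assumes "\<And>k. e k \<noteq> 0" and "e 1 * e 4 \<noteq> e 2 * e 3"
    and "w \<in> ghz_space e" and "is_fully_product w"
  shows "w = zvec"
proof -
  obtain a b c where w: "w = prodvec a b c" using assms(4) unfolding is_fully_product_def by blast
  have "a False * b False * c False = 0 \<and> a False * b False * c True = 0 \<and>
        a False * b True * c False = 0 \<and> a False * b True * c True = 0 \<and>
        a True * b False * c False = 0 \<and> a True * b False * c True = 0 \<and>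
        a True * b True * c False = 0 \<and> a True * b True * c True = 0"
    using assms(3) unfolding w ghz_space_def prodvec_def
    by (intro product_coefficients_vanish[OF assms(1) assms(1) assms(1) assms(1) assms(2)]) simp_all
  thus ?thesis unfolding w zvec_def prodvec_def
    by (intro qstate_eqI) (case_tac x; case_tac y; case_tac z; simp)
qed

lemma eith_eq_cis: "eith t = cis t"
  by (simp add: eith_def cis_conv_exp)

lemma eith_unit: "cnj (eith t) * eith t = 1"
  by (simp add: eith_eq_cis cis_cnj cis_mult)

text \<open>With ordered angles in [0, 2 pi), a + d - (b + c) lies strictly between -2 pi and 2 pi,
  so  e^{i(a+d)} = e^{i(b+c)}  would force  d - c = b - a.\<close>
lemma eith_product_ne:
  assumes "0 \<le> a" "a \<le> b" "b \<le> c" "c \<le> d" "d < 2*pi" and "d - c \<noteq> b - a"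
  shows "eith a * eith d \<noteq> eith b * eith c"
proof
  assume "eith a * eith d = eith b * eith c"
  hence "cis (a + d) = cis (b + c)" by (simp add: eith_eq_cis cis_mult)
  hence "cis (a + d - (b + c)) = 1" by (simp add: cis_divide[symmetric])
  hence "cos (a + d - (b + c)) = 1" by (metis cis.simps(1) one_complex.simps(1))
  then obtain n :: int where n: "a + d - (b + c) = n * 2 * pi" by (auto simp: cos_one_2pi_int)
  have "\<bar>a + d - (b + c)\<bar> < 2 * pi" using assms(1-5) by auto
  hence "\<bar>real_of_int n\<bar> < 1" using n pi_gt_zero by (simp add: abs_mult)
  hence "n = 0" by linarith
  thus False using n assms(6) by simp
qed

definition basis_proj :: "bool \<Rightarrow> qop" where
  "basis_proj b = (\<lambda>r c. if r = b \<and> c = b then 1 else 0)"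

lemma complete_meas_basis: "complete_meas [basis_proj False, basis_proj True]"
  unfolding complete_meas_def by (auto simp: basis_proj_def UNIV_bool numeral_2_eq_2)

definition basis_protocol :: "(bool \<Rightarrow> bool \<Rightarrow> bool \<Rightarrow> nat) \<Rightarrow> locc" where
  "basis_protocol L = Meas 0 (map (\<lambda>x. (basis_proj x,
       Meas 1 (map (\<lambda>y. (basis_proj y,
         Meas 2 (map (\<lambda>z. (basis_proj z, Guess (L x y z))) [False, True])))
       [False, True]))) [False, True])"

lemma wf_basis_protocol: "wf_locc (basis_protocol L)"
  by (simp add: basis_protocol_def complete_meas_basis)

lemma basis_projections_compose:
  "apply_local 2 (basis_proj z) (apply_local 1 (basis_proj y) (apply_local 0 (basis_proj x) \<psi>))
     = (\<lambda>v. if v = (x,y,z) then \<psi> v else 0)"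
  by (rule qstate_eqI) (auto simp: apply_local_def basis_proj_def UNIV_bool)

lemma basis_protocol_identifies:
  assumes "\<And>x y z. \<psi> (x,y,z) \<noteq> 0 \<Longrightarrow> L x y z = k"
  shows "locc_identifies (basis_protocol L) k \<psi>"
proof -
  have "(\<lambda>v. if v = (x,y,z) then \<psi> v else 0) = zvec \<or> L x y z = k" for x y z
    using assms[of x y z] by (cases "\<psi> (x,y,z) = 0") (auto simp: zvec_def)
  hence "locc_identifies (Guess (L x y z)) k (\<lambda>v. if v = (x,y,z) then \<psi> v else 0)" for x y z
    by simp
  thus ?thesis
    unfolding basis_protocol_def
    by (simp del: locc_identifies.simps(1) add: basis_projections_compose[simplified])
qed

lemma disjoint_supports_LOCC_distinguishable:
  assumes "\<And>k x y z. k \<in> I \<Longrightarrow> v k (x,y,z) \<noteq> 0 \<Longrightarrow> L x y z = k"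
  shows "perfectly_LOCC_distinguishable I v"
  unfolding perfectly_LOCC_distinguishable_def
  using wf_basis_protocol basis_protocol_identifies assms by blast

text \<open>The k-th GHZ-type vector (and any multiple of it) is supported on x_k and not x_k,
  so its label k is recognised by which qubits agree.\<close>
definition ghz_label :: "bool \<Rightarrow> bool \<Rightarrow> bool \<Rightarrow> nat" where
  "ghz_label x y z = (if x = y \<and> y = z then 1 else if x = y then 2 else if x = z then 3 else 4)"

lemma ghz_family_support:
  assumes "k \<in> {1..4}" and "s * ghz_family e k (x,y,z) \<noteq> 0"
  shows "ghz_label x y z = k"
proof -
  have "k = 1 \<or> k = 2 \<or> k = 3 \<or> k = 4" using assms(1) by auto
  thus ?thesis using assms(2)
    by (cases x; cases y; cases z) (auto simp: ghz_family_def ghz_label_def)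
qed

theorem mainTheorem10:
  fixes \<theta> :: "nat \<Rightarrow> real"
  assumes "0 \<le> \<theta> 1" and "\<theta> 1 \<le> \<theta> 2" and "\<theta> 2 \<le> \<theta> 3" and "\<theta> 3 \<le> \<theta> 4"
    and "\<theta> 4 < 2 * pi"
    and "\<theta> 4 - \<theta> 3 \<noteq> \<theta> 2 - \<theta> 1"
  shows "orth_compl (span4 (Phi \<theta>)) = span4 (Psi \<theta>)
     \<and> (\<forall>w\<in>span4 (Phi \<theta>). is_fully_product w \<longrightarrow> w = zvec)
     \<and> (\<forall>w\<in>span4 (Psi \<theta>). is_fully_product w \<longrightarrow> w = zvec)
     \<and> unextendible_basis4 (Phi \<theta>) \<and> unextendible_basis4 (Psi \<theta>)
     \<and> perfectly_LOCC_distinguishable {1..4}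
         (\<lambda>k. vscale (complex_of_real (1 / sqrt 2)) (Phi \<theta> k))"
proof -
  define e where "e = (\<lambda>k. eith (\<theta> k))"
  have unit: "cnj (e k) * e k = 1" "cnj (- e k) * - e k = 1" for k
    by (simp_all add: e_def eith_unit)
  have nonzero: "e k \<noteq> 0" "- e k \<noteq> 0" for k using unit(1)[of k] by auto
  have phases: "e 1 * e 4 \<noteq> e 2 * e 3" "- e 1 * - e 4 \<noteq> - e 2 * - e 3"
    using eith_product_ne[OF assms] by (simp_all add: e_def)
  have spans: "span4 (Phi \<theta>) = ghz_space e" "span4 (Psi \<theta>) = ghz_space (\<lambda>k. - e k)"
    by (simp_all add: Phi_eq_ghz_family Psi_eq_ghz_family span_ghz_family e_def)
  have orth: "orth_compl (ghz_space e) = ghz_space (\<lambda>k. - e k)"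
             "orth_compl (ghz_space (\<lambda>k. - e k)) = ghz_space e"
    using orth_compl_ghz_space[of e] orth_compl_ghz_space[of "\<lambda>k. - e k"] unit by simp_all
  have indep: "lin_indep4 (Phi \<theta>)" "lin_indep4 (Psi \<theta>)"
    by (simp_all add: Phi_eq_ghz_family Psi_eq_ghz_family lin_indep_ghz_family)
  have LOCC: "perfectly_LOCC_distinguishable {1..4}
         (\<lambda>k. vscale (complex_of_real (1 / sqrt 2)) (Phi \<theta> k))"
    by (rule disjoint_supports_LOCC_distinguishable[where L = ghz_label])
       (auto simp: vscale_def Phi_eq_ghz_family intro: ghz_family_support)
  show ?thesis
    unfolding unextendible_basis4_def spans orth
    using no_product_in_ghz_space[of e] no_product_in_ghz_space[of "\<lambda>k. - e k"]
      nonzero phases indep LOCC by blast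
qed

end
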